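(* Let $\mathcal{X}=\{1,\dots,n\}$ and $\pi$ a probability mass function on $\mathcal{X}$ with full support and $\pi(1)\le\dots\le\pi(n)$. Fix $k\in\{1,\dots,n\}$, let $\mathcal{O}_i=\{i\}$ for $1\le i\le k-1$ and $\mathcal{O}_k=\{k,\dots,n\}$, and let $G$ be the Gibbs kernel of this partition. For $P\in\mathcal{S}(\pi)$, $D^\pi_{KL}(GPG\|\Pi)=0$ if and only if: (1) $P(x,y)=\pi(y)$ for all $x,y\in\{1,\dots,k-1\}$; (2) $\sum_{w\in\mathcal{O}_k}P(x,w)=\pi(\mathcal{O}_k)$ for all $x\in\{1,\dots,k-1\}$; (3) $\sum_{z\in\mathcal{O}_k}\pi(z)P(z,y)=\pi(\mathcal{O}_k)\pi(y)$ for all $y\in\{1,\dots,k-1\}$; (4) $\sum_{z,w\in\mathcal{O}_k}\pi(z)P(z,w)=\pi(\mathcal{O}_k)^2$. Equivalently, these conditions characterise $GPG=\Pi$.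
   Context: $\mathcal{S}(\pi)$ is the set of transition matrices $P$ with $\pi P=\pi$. $G(x,y)=\pi(y)/\pi(\mathcal{O}(x))$ if $y$ is in the block $\mathcal{O}(x)$ containing $x$, else $0$, with $\pi(A)=\sum_{z\in A}\pi(z)$. $\Pi$ is the matrix with all rows equal to $\pi$, and $D^\pi_{KL}(P\|Q)=\sum_{x,y}\pi(x)P(x,y)\log\frac{P(x,y)}{Q(x,y)}$ with $0\log(0/a)=0$. *)

theory Defs
  imports Complex_Main
begin

text \<open>State space X = {1..n}; kernels are functions nat => nat => real,
  only their values on {1..n} x {1..n} matter.\<close>

definition is_pmf :: "nat \<Rightarrow> (nat \<Rightarrow> real) \<Rightarrow> bool" where
  "is_pmf n \<pi> \<longleftrightarrow> (\<forall>x\<in>{1..n}. \<pi> x \<ge> 0) \<and> (\<Sum>x\<in>{1..n}. \<pi> x) = 1"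

definition is_transition :: "nat \<Rightarrow> (nat \<Rightarrow> nat \<Rightarrow> real) \<Rightarrow> bool" where
  "is_transition n P \<longleftrightarrow> (\<forall>x\<in>{1..n}. \<forall>y\<in>{1..n}. P x y \<ge> 0)
     \<and> (\<forall>x\<in>{1..n}. (\<Sum>y\<in>{1..n}. P x y) = 1)"

definition stat_set :: "nat \<Rightarrow> (nat \<Rightarrow> real) \<Rightarrow> (nat \<Rightarrow> nat \<Rightarrow> real) set" where
  "stat_set n \<pi> = {P. is_transition n P \<and> (\<forall>y\<in>{1..n}. (\<Sum>x\<in>{1..n}. \<pi> x * P x y) = \<pi> y)}"

definition massp :: "(nat \<Rightarrow> real) \<Rightarrow> nat set \<Rightarrow> real" where
  "massp \<pi> A = (\<Sum>z\<in>A. \<pi> z)"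

definition blk :: "nat \<Rightarrow> nat \<Rightarrow> nat \<Rightarrow> nat set" where
  "blk n k x = (if x < k then {x} else {k..n})"

definition gibbs :: "nat \<Rightarrow> nat \<Rightarrow> (nat \<Rightarrow> real) \<Rightarrow> nat \<Rightarrow> nat \<Rightarrow> real" where
  "gibbs n k \<pi> x y = (if y \<in> blk n k x then \<pi> y / massp \<pi> (blk n k x) else 0)"

definition mmul :: "nat \<Rightarrow> (nat \<Rightarrow> nat \<Rightarrow> real) \<Rightarrow> (nat \<Rightarrow> nat \<Rightarrow> real) \<Rightarrow> nat \<Rightarrow> nat \<Rightarrow> real" where
  "mmul n A B x y = (\<Sum>z\<in>{1..n}. A x z * B z y)"

definition Pimat :: "(nat \<Rightarrow> real) \<Rightarrow> nat \<Rightarrow> nat \<Rightarrow> real" where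
  "Pimat \<pi> x y = \<pi> y"

definition KLpi :: "nat \<Rightarrow> (nat \<Rightarrow> real) \<Rightarrow> (nat \<Rightarrow> nat \<Rightarrow> real) \<Rightarrow> (nat \<Rightarrow> nat \<Rightarrow> real) \<Rightarrow> real" where
  "KLpi n \<pi> P Q = (\<Sum>x\<in>{1..n}. \<Sum>y\<in>{1..n}.
      (if P x y = 0 then 0 else \<pi> x * P x y * ln (P x y / Q x y)))"

end

theory Submission
  imports Defs
begin

text \<open>Left multiplication by the Gibbs kernel G replaces the rows of the big block
  O_k by their \<pi>-average, and right multiplication replaces the columns of O_k by
  their sum times \<pi>(y)/\<pi>(O_k). So every block rectangle of GPG is a multiple of
  the corresponding block of \<Pi>, and GPG = \<Pi> reduces to one scalar equation per pair
  of blocks: these are conditions (1)-(4). Since GPG and \<Pi> are stochastic and \<Pi> is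
  positive, Gibbs' inequality makes the relative entropy of each row nonnegative,
  vanishing only for equal rows, so the \<pi>-weighted divergence vanishes iff GPG = \<Pi>.\<close>

definition rel_entr :: "real \<Rightarrow> real \<Rightarrow> real" where
  "rel_entr p q = (if p = 0 then 0 else p * ln (p / q))"

lemma rel_entr_ge_diff:
  assumes "0 \<le> p" "0 < q"
  shows "p - q \<le> rel_entr p q"
proof (cases "p = 0")
  case False
  then have "0 < p" using assms by simp
  have "ln (q / p) \<le> q / p - 1" using \<open>0 < p\<close> assms by (intro ln_le_minus_one) simp
  moreover have "ln (p / q) = - ln (q / p)" using \<open>0 < p\<close> assms by (simp add: ln_div)
  ultimately have "1 - q / p \<le> ln (p / q)" by simp
  then have "p * (1 - q / p) \<le> p * ln (p / q)" using \<open>0 < p\<close> by (simp add: mult_left_mono)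
  moreover have "p * (1 - q / p) = p - q" using \<open>0 < p\<close> by (simp add: field_simps)
  ultimately show ?thesis using False by (simp add: rel_entr_def)
qed (use assms in \<open>simp add: rel_entr_def\<close>)

lemma rel_entr_eq_diff_iff:
  assumes "0 \<le> p" "0 < q"
  shows "rel_entr p q = p - q \<longleftrightarrow> p = q"
proof
  assume eq: "rel_entr p q = p - q"
  show "p = q"
  proof (rule ccontr)
    assume "p \<noteq> q"
    have "p \<noteq> 0" using eq assms by (auto simp: rel_entr_def)
    then have "0 < p" using assms by simp
    then have "0 < q / p" using assms by simp
    have "p * ln (p / q) = p - q" using eq \<open>0 < p\<close> by (simp add: rel_entr_def)
    then have "ln (p / q) = 1 - q / p" using \<open>0 < p\<close> by (simp add: field_simps)
    then have "ln (q / p) = q / p - 1" using \<open>0 < p\<close> assms by (simp add: ln_div)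
    then have "q / p = 1" using ln_eq_minus_one \<open>0 < q / p\<close> by blast
    then show False using \<open>p \<noteq> q\<close> \<open>0 < p\<close> by simp
  qed
qed (simp add: rel_entr_def)

text \<open>Subtracting p - q adds zero in total but makes every summand nonnegative.\<close>

lemma sum_rel_entr_eq_sum_excess:
  assumes "finite A" "sum p A = sum q A"
  shows "(\<Sum>y\<in>A. rel_entr (p y) (q y)) = (\<Sum>y\<in>A. rel_entr (p y) (q y) - (p y - q y))"
  using assms by (simp add: sum_subtractf)

lemma sum_rel_entr_nonneg:
  assumes "finite A" "sum p A = sum q A" "\<forall>y\<in>A. 0 \<le> p y \<and> 0 < q y"
  shows "0 \<le> (\<Sum>y\<in>A. rel_entr (p y) (q y))"
  unfolding sum_rel_entr_eq_sum_excess[OF assms(1,2)]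
  using assms(3) rel_entr_ge_diff by (intro sum_nonneg) simp

lemma sum_rel_entr_eq_0_iff:
  assumes "finite A" "sum p A = sum q A" "\<forall>y\<in>A. 0 \<le> p y \<and> 0 < q y"
  shows "(\<Sum>y\<in>A. rel_entr (p y) (q y)) = 0 \<longleftrightarrow> (\<forall>y\<in>A. p y = q y)"
proof -
  have "(\<Sum>y\<in>A. rel_entr (p y) (q y) - (p y - q y)) = 0
      \<longleftrightarrow> (\<forall>y\<in>A. rel_entr (p y) (q y) - (p y - q y) = 0)"
    using assms(1,3) rel_entr_ge_diff by (intro sum_nonneg_eq_0_iff) simp_all
  also have "\<dots> \<longleftrightarrow> (\<forall>y\<in>A. p y = q y)"
    using assms(3) rel_entr_eq_diff_iff by (intro ball_cong) simp_all
  finally show ?thesis unfolding sum_rel_entr_eq_sum_excess[OF assms(1,2)] .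
qed

lemma KLpi_eq_row_sum:
  "KLpi n \<pi> P Q = (\<Sum>x\<in>{1..n}. \<pi> x * (\<Sum>y\<in>{1..n}. rel_entr (P x y) (Q x y)))"
  unfolding KLpi_def rel_entr_def sum_distrib_left by (intro sum.cong) auto

lemma KLpi_eq_0_iff:
  assumes "\<forall>x\<in>{1..n}. 0 < \<pi> x" "is_transition n P" "is_transition n Q"
    and "\<forall>x\<in>{1..n}. \<forall>y\<in>{1..n}. 0 < Q x y"
  shows "KLpi n \<pi> P Q = 0 \<longleftrightarrow> (\<forall>x\<in>{1..n}. \<forall>y\<in>{1..n}. P x y = Q x y)"
proof -
  have rows: "sum (P x) {1..n} = sum (Q x) {1..n}"
    and entries: "\<forall>y\<in>{1..n}. 0 \<le> P x y \<and> 0 < Q x y" if "x \<in> {1..n}" for x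
    using assms(2-4) that by (auto simp: is_transition_def)
  have "KLpi n \<pi> P Q = 0 \<longleftrightarrow>
      (\<forall>x\<in>{1..n}. \<pi> x * (\<Sum>y\<in>{1..n}. rel_entr (P x y) (Q x y)) = 0)"
    unfolding KLpi_eq_row_sum using assms(1) rows entries
    by (intro sum_nonneg_eq_0_iff ballI mult_nonneg_nonneg sum_rel_entr_nonneg)
      (auto intro: less_imp_le)
  also have "\<dots> \<longleftrightarrow> (\<forall>x\<in>{1..n}. \<forall>y\<in>{1..n}. P x y = Q x y)"
  proof (intro ball_cong refl)
    fix x assume "x \<in> {1..n}"
    then have "\<pi> x \<noteq> 0" using assms(1) by force
    then show "\<pi> x * (\<Sum>y\<in>{1..n}. rel_entr (P x y) (Q x y)) = 0 \<longleftrightarrow> (\<forall>y\<in>{1..n}. P x y = Q x y)"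
      using sum_rel_entr_eq_0_iff[OF _ rows entries] \<open>x \<in> {1..n}\<close> by simp
  qed
  finally show ?thesis .
qed

lemma is_transition_mmul:
  assumes "is_transition n A" "is_transition n B"
  shows "is_transition n (mmul n A B)"
  unfolding is_transition_def
proof safe
  fix x y assume "x \<in> {1..n}" "y \<in> {1..n}"
  then show "0 \<le> mmul n A B x y"
    using assms unfolding mmul_def is_transition_def by (intro sum_nonneg) auto
next
  fix x assume "x \<in> {1..n}"
  have "(\<Sum>y\<in>{1..n}. mmul n A B x y) = (\<Sum>z\<in>{1..n}. A x z * (\<Sum>y\<in>{1..n}. B z y))"
    unfolding mmul_def sum_distrib_left by (rule sum.swap)
  also have "\<dots> = 1" using assms \<open>x \<in> {1..n}\<close> by (simp add: is_transition_def)
  finally show "(\<Sum>y\<in>{1..n}. mmul n A B x y) = 1" .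
qed

lemma is_transition_Pimat: "is_pmf n \<pi> \<Longrightarrow> is_transition n (Pimat \<pi>)"
  by (simp add: is_pmf_def is_transition_def Pimat_def)

lemma massp_pos:
  assumes "\<forall>x\<in>A. 0 < \<pi> x" "finite A" "A \<noteq> {}"
  shows "0 < massp \<pi> A"
  unfolding massp_def using assms by (intro sum_pos) auto

lemma sum_tail_restrict:
  fixes k n :: nat
  assumes "1 \<le> k"
  shows "(\<Sum>z\<in>{1..n}. if k \<le> z then f z else 0) = (\<Sum>z\<in>{k..n}. f z)"
proof -
  have "{z \<in> {1..n}. k \<le> z} = {k..n}" using assms by auto
  then show ?thesis by (simp flip: sum.inter_filter)
qed

lemma gibbs_eq:
  assumes "\<forall>z\<in>{1..n}. 0 < \<pi> z" "x \<in> {1..n}"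
  shows "gibbs n k \<pi> x z = (if x < k then (if z = x then 1 else 0)
    else if z \<in> {k..n} then \<pi> z / massp \<pi> {k..n} else 0)"
proof -
  have "\<pi> x \<noteq> 0" using assms by force
  then show ?thesis by (simp add: gibbs_def blk_def massp_def)
qed

lemma is_transition_gibbs:
  assumes pos: "\<forall>z\<in>{1..n}. 0 < \<pi> z" and k: "k \<in> {1..n}"
  shows "is_transition n (gibbs n k \<pi>)"
  unfolding is_transition_def
proof safe
  have "0 < massp \<pi> {k..n}" using pos k by (intro massp_pos) auto
  then show "0 \<le> gibbs n k \<pi> x y" if "x \<in> {1..n}" "y \<in> {1..n}" for x y
    using that pos gibbs_eq[OF pos] by (auto intro: less_imp_le)
  show "(\<Sum>y\<in>{1..n}. gibbs n k \<pi> x y) = 1" if x: "x \<in> {1..n}" for x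
  proof (cases "x < k")
    case True
    then show ?thesis using x by (simp add: gibbs_eq[OF pos x])
  next
    case False
    have "(\<Sum>y\<in>{1..n}. gibbs n k \<pi> x y) =
        (\<Sum>y\<in>{1..n}. if k \<le> y then \<pi> y / massp \<pi> {k..n} else 0)"
      using False gibbs_eq[OF pos x] by (intro sum.cong) auto
    also have "\<dots> = (\<Sum>y\<in>{k..n}. \<pi> y / massp \<pi> {k..n})"
      using k by (intro sum_tail_restrict) simp
    also have "\<dots> = (\<Sum>y\<in>{k..n}. \<pi> y) / massp \<pi> {k..n}"
      by (simp add: sum_divide_distrib)
    also have "\<dots> = 1" using \<open>0 < massp \<pi> {k..n}\<close> by (simp add: massp_def)
    finally show ?thesis .
  qed
qed

lemma mmul_gibbs_left:
  assumes pos: "\<forall>z\<in>{1..n}. 0 < \<pi> z" and "1 \<le> k" and x: "x \<in> {1..n}"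
  shows "mmul n (gibbs n k \<pi>) A x w =
    (if x < k then A x w else (\<Sum>z\<in>{k..n}. \<pi> z * A z w) / massp \<pi> {k..n})"
proof (cases "x < k")
  case True
  then have "mmul n (gibbs n k \<pi>) A x w = (\<Sum>z\<in>{1..n}. if z = x then A z w else 0)"
    unfolding mmul_def using gibbs_eq[OF pos x] by (intro sum.cong) auto
  then show ?thesis using True x by simp
next
  case False
  then have "mmul n (gibbs n k \<pi>) A x w =
      (\<Sum>z\<in>{1..n}. if k \<le> z then \<pi> z * A z w / massp \<pi> {k..n} else 0)"
    unfolding mmul_def using gibbs_eq[OF pos x] by (intro sum.cong) auto
  also have "\<dots> = (\<Sum>z\<in>{k..n}. \<pi> z * A z w / massp \<pi> {k..n})"
    using \<open>1 \<le> k\<close> by (rule sum_tail_restrict)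
  finally show ?thesis using False by (simp add: sum_divide_distrib)
qed

lemma mmul_gibbs_right:
  assumes pos: "\<forall>z\<in>{1..n}. 0 < \<pi> z" and "1 \<le> k" and y: "y \<in> {1..n}"
  shows "mmul n A (gibbs n k \<pi>) x y =
    (if y < k then A x y else (\<Sum>w\<in>{k..n}. A x w) * \<pi> y / massp \<pi> {k..n})"
proof (cases "y < k")
  case True
  then have "mmul n A (gibbs n k \<pi>) x y = (\<Sum>w\<in>{1..n}. if w = y then A x w else 0)"
    unfolding mmul_def using gibbs_eq[OF pos] by (intro sum.cong) auto
  then show ?thesis using True y by simp
next
  case False
  then have "mmul n A (gibbs n k \<pi>) x y =
      (\<Sum>w\<in>{1..n}. if k \<le> w then A x w * \<pi> y / massp \<pi> {k..n} else 0)"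
    unfolding mmul_def using gibbs_eq[OF pos] y by (intro sum.cong) auto
  also have "\<dots> = (\<Sum>w\<in>{k..n}. A x w * \<pi> y / massp \<pi> {k..n})"
    using \<open>1 \<le> k\<close> by (rule sum_tail_restrict)
  finally show ?thesis using False by (simp add: sum_divide_distrib sum_distrib_right)
qed

lemma gibbs_sandwich_eq:
  assumes pos: "\<forall>z\<in>{1..n}. 0 < \<pi> z" and "1 \<le> k" and x: "x \<in> {1..n}" and y: "y \<in> {1..n}"
  defines "G \<equiv> gibbs n k \<pi>" and "m \<equiv> massp \<pi> {k..n}"
  shows "mmul n (mmul n G P) G x y =
    (if x < k then
       if y < k then P x y else (\<Sum>w\<in>{k..n}. P x w) * \<pi> y / m
     else
       if y < k then (\<Sum>z\<in>{k..n}. \<pi> z * P z y) / m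
       else (\<Sum>z\<in>{k..n}. \<Sum>w\<in>{k..n}. \<pi> z * P z w) / m * \<pi> y / m)"
proof -
  have GP: "mmul n G P x w = (if x < k then P x w else (\<Sum>z\<in>{k..n}. \<pi> z * P z w) / m)" for w
    unfolding G_def m_def using pos \<open>1 \<le> k\<close> x by (rule mmul_gibbs_left)
  have GP_tail: "(\<Sum>w\<in>{k..n}. mmul n G P x w) =
      (if x < k then \<Sum>w\<in>{k..n}. P x w else (\<Sum>z\<in>{k..n}. \<Sum>w\<in>{k..n}. \<pi> z * P z w) / m)"
  proof (cases "x < k")
    case False
    have "(\<Sum>w\<in>{k..n}. mmul n G P x w) = (\<Sum>w\<in>{k..n}. \<Sum>z\<in>{k..n}. \<pi> z * P z w) / m"
      using False by (simp add: GP sum_divide_distrib)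
    also have "\<dots> = (\<Sum>z\<in>{k..n}. \<Sum>w\<in>{k..n}. \<pi> z * P z w) / m"
      by (subst sum.swap) (rule refl)
    finally show ?thesis using False by simp
  qed (simp add: GP)
  have "mmul n (mmul n G P) G x y =
      (if y < k then mmul n G P x y else (\<Sum>w\<in>{k..n}. mmul n G P x w) * \<pi> y / m)"
    unfolding G_def m_def using pos \<open>1 \<le> k\<close> y by (rule mmul_gibbs_right)
  then show ?thesis unfolding GP_tail by (simp add: GP)
qed

lemma gibbs_sandwich_eq_Pimat_iff:
  assumes pos: "\<forall>z\<in>{1..n}. 0 < \<pi> z" and k: "k \<in> {1..n}"
  defines "G \<equiv> gibbs n k \<pi>" and "m \<equiv> massp \<pi> {k..n}"
  shows "(\<forall>x\<in>{1..n}. \<forall>y\<in>{1..n}. mmul n (mmul n G P) G x y = \<pi> y) \<longleftrightarrow>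
      (\<forall>x\<in>{1..<k}. \<forall>y\<in>{1..<k}. P x y = \<pi> y)
      \<and> (\<forall>x\<in>{1..<k}. (\<Sum>w\<in>{k..n}. P x w) = m)
      \<and> (\<forall>y\<in>{1..<k}. (\<Sum>z\<in>{k..n}. \<pi> z * P z y) = m * \<pi> y)
      \<and> (\<Sum>z\<in>{k..n}. \<Sum>w\<in>{k..n}. \<pi> z * P z w) = m\<^sup>2"
    (is "?lhs \<longleftrightarrow> ?c1 \<and> ?c2 \<and> ?c3 \<and> ?c4")
proof -
  have "0 < m" unfolding m_def using pos k by (intro massp_pos) auto
  have entry: "mmul n (mmul n G P) G x y = \<pi> y \<longleftrightarrow>
      (if x < k then
         if y < k then P x y = \<pi> y else (\<Sum>w\<in>{k..n}. P x w) = m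
       else
         if y < k then (\<Sum>z\<in>{k..n}. \<pi> z * P z y) = m * \<pi> y
         else (\<Sum>z\<in>{k..n}. \<Sum>w\<in>{k..n}. \<pi> z * P z w) = m\<^sup>2)"
    if x: "x \<in> {1..n}" and y: "y \<in> {1..n}" for x y
  proof -
    have "0 < \<pi> y" using pos y by blast
    moreover have "1 \<le> k" using k by simp
    ultimately show ?thesis
      unfolding G_def m_def gibbs_sandwich_eq[OF pos \<open>1 \<le> k\<close> x y]
      using \<open>0 < m\<close> by (auto simp: m_def field_simps power2_eq_square)
  qed
  have "k \<le> n" using k by simp
  show ?thesis
  proof
    assume lhs: ?lhs
    have ?c1 using lhs entry \<open>k \<le> n\<close> by fastforce
    moreover have ?c2 using lhs entry[of _ k] k \<open>k \<le> n\<close> by fastforce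
    moreover have ?c3 using lhs entry[of k] k \<open>k \<le> n\<close> by fastforce
    moreover have ?c4 using lhs entry[of k k] k by simp
    ultimately show "?c1 \<and> ?c2 \<and> ?c3 \<and> ?c4" by blast
  next
    assume "?c1 \<and> ?c2 \<and> ?c3 \<and> ?c4"
    then show ?lhs using entry by (simp add: not_less)
  qed
qed

theorem proposition7p2:
  fixes n k :: nat and \<pi> :: "nat \<Rightarrow> real" and P :: "nat \<Rightarrow> nat \<Rightarrow> real"
  assumes pmf: "is_pmf n \<pi>"
    and full: "\<forall>x\<in>{1..n}. \<pi> x > 0"
    and sorted: "\<forall>x\<in>{1..n}. \<forall>y\<in>{1..n}. x \<le> y \<longrightarrow> \<pi> x \<le> \<pi> y"
    and k: "k \<in> {1..n}"
    and P: "P \<in> stat_set n \<pi>"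
  defines "G \<equiv> gibbs n k \<pi>"
    and "conds \<equiv>
      (\<forall>x\<in>{1..<k}. \<forall>y\<in>{1..<k}. P x y = \<pi> y)
      \<and> (\<forall>x\<in>{1..<k}. (\<Sum>w\<in>{k..n}. P x w) = massp \<pi> {k..n})
      \<and> (\<forall>y\<in>{1..<k}. (\<Sum>z\<in>{k..n}. \<pi> z * P z y) = massp \<pi> {k..n} * \<pi> y)
      \<and> (\<Sum>z\<in>{k..n}. \<Sum>w\<in>{k..n}. \<pi> z * P z w) = (massp \<pi> {k..n})\<^sup>2"
  shows "(KLpi n \<pi> (mmul n (mmul n G P) G) (Pimat \<pi>) = 0 \<longleftrightarrow> conds)
       \<and> ((\<forall>x\<in>{1..n}. \<forall>y\<in>{1..n}. mmul n (mmul n G P) G x y = Pimat \<pi> x y) \<longleftrightarrow> conds)"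
proof -
  have "is_transition n P" using P by (simp add: stat_set_def)
  then have GPG: "is_transition n (mmul n (mmul n G P) G)"
    unfolding G_def using is_transition_gibbs[OF full k] by (intro is_transition_mmul)
  have eq_iff: "(\<forall>x\<in>{1..n}. \<forall>y\<in>{1..n}. mmul n (mmul n G P) G x y = Pimat \<pi> x y) \<longleftrightarrow> conds"
    unfolding G_def conds_def Pimat_def using full k by (rule gibbs_sandwich_eq_Pimat_iff)
  have "KLpi n \<pi> (mmul n (mmul n G P) G) (Pimat \<pi>) = 0 \<longleftrightarrow>
      (\<forall>x\<in>{1..n}. \<forall>y\<in>{1..n}. mmul n (mmul n G P) G x y = Pimat \<pi> x y)"
    using full GPG is_transition_Pimat[OF pmf] by (intro KLpi_eq_0_iff) (simp_all add: Pimat_def)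
  with eq_iff show ?thesis by blast
qed

end
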